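(* The following rules are sound, i.e. for every instance, if all premisses are valid then the conclusion is valid ($\Gamma,\Delta$ arbitrary finite multisets of compound diagrams): (a) for a pure Euler diagram $d=(L,Z)$ such that every $z\in M(d)$ has some $\ell\in L$ with $\mathrm{adj}(z,\ell)\in M(d)$, and $\{c_1,\dots,c_k\}\subseteq L$ the maximal set of contours with $M(d\setminus c_i)\neq\emptyset$: $(\mathrm{red}L)$ from $d\setminus c_1,\dots,d\setminus c_k,\Gamma\Rightarrow\Delta$ infer $d,\Gamma\Rightarrow\Delta$; $(\mathrm{red}R)$ from $\Gamma\Rightarrow\Delta,d\setminus c_i$ for all $1\le i\le k$ infer $\Gamma\Rightarrow\Delta,d$; (b) for a pure Euler diagram $d=(L,Z)$ with $|M(d)|>1$ and pure Euler diagrams $d_1=(L,Z_1)$, $d_2=(L,Z_2)$ with $Z_1\cap Z_2=Z$: $(\mathrm{mzsep}L)$ from $d_1,d_2,\Gamma\Rightarrow\Delta$ infer $d,\Gamma\Rightarrow\Delta$; $(\mathrm{mzsep}R)$ from $\Gamma\Rightarrow\Delta,d_1$ and $\Gamma\Rightarrow\Delta,d_2$ infer $\Gamma\Rightarrow\Delta,d$; (c) for a pure Euler diagram $d$ with $M(d)=\{z\}$, $z=(\{n_1,\dots,n_k\},\{o_1,\dots,o_l\})$: $(\mathrm{impdec}L)$ from $d,\Gamma\Rightarrow P_{n_i}$ for all $1\le i\le k$ and $P_{o_j},\Gamma\Rightarrow\Delta$ for all $1\le j\le l$ infer $d,\Gamma\Rightarrow\Delta$; $(\mathrm{impdec}R)$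 from $P_{n_1},\dots,P_{n_k},\Gamma\Rightarrow P_{o_1},\dots,P_{o_l}$ infer $\Gamma\Rightarrow\Delta,d$.
   Context: Fix a countably infinite set $\mathcal V$ of propositional variables. A Heyting algebra $(H,\vee,\wedge,\to,0,1)$ is a bounded distributive lattice with a binary operation $\to$ such that $c\wedge a\le b\iff c\le a\to b$; $-a:=a\to0$; empty meets are $1$, empty joins $0$. A valuation is a map $v:\mathcal V\to H$. For a finite $L\subset\mathcal V$, a zone over $L$ is a pair $z=(\mathrm{in}(z),\mathrm{out}(z))$ of disjoint subsets of $L$ with union $L$; $\mathcal Z(L)$ is the set of all zones over $L$; $v(z)=\bigwedge_{c\in\mathrm{in}(z)}v(c)\wedge\bigwedge_{c\in\mathrm{out}(z)}-v(c)$ and $m_v(z)=\big(\bigwedge_{c\in\mathrm{in}(z)}v(c)\big)\to\big(\bigvee_{c\in\mathrm{out}(z)}v(c)\big)$. Unitary diagrams are of three kinds: Venn diagrams $d=(L,\mathcal Z(L),S)$, $S\subseteq\mathcal Z(L)$ shaded, $[\![d]\!]_v=\bigvee_{z\in S}v(z)$; pure Euler diagrams $d=(L,Z)$, $Z\subseteq\mathcal Z(L)$ visible zones, missing zones $M(d)=\mathcal Z(L)\setminus Z$, $[\![d]\!]_v=\bigwedge_{z\in M(d)}m_v(z)$; Euler–Venn diagrams $d=(L,Z,S)$, $S\subseteq Z\subseteq\mathcal Z(L)$, $[\![d]\!]_v=[\![(L,Z)]\!]_v\to[\![(L,\mathcal Z(L),S)]\!]_v$. Positive literal $P_c=(\{c\},\mathcal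 Z(\{c\}),\{(\{c\},\emptyset)\})$ (a Venn diagram). Compound diagrams are built from unitary ones with $\wedge,\vee,\to$, interpreted by meet, join and Heyting implication. For $c\in L$, $\mathrm{adj}(z,c)$ is the zone obtained from $z$ by moving $c$ from $\mathrm{out}(z)$ to $\mathrm{in}(z)$ or vice versa. Reduction: $z\setminus c=(\mathrm{in}(z)\setminus\{c\},\mathrm{out}(z)\setminus\{c\})$; for pure Euler $d=(L,Z)$, $d\setminus c=(L\setminus\{c\},\{z\setminus c:z\in Z\})$. A sequent $\Gamma\Rightarrow\Delta$ (finite multisets of compound diagrams) is valid iff for every Heyting algebra and valuation $v$, $\bigwedge_{D\in\Gamma}[\![D]\!]_v\le\bigvee_{E\in\Delta}[\![E]\!]_v$. *)

theory Defs
  imports Main "HOL-Library.Multiset"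
begin

class heyting = bounded_lattice + distrib_lattice +
  fixes hto :: "'a \<Rightarrow> 'a \<Rightarrow> 'a"
  assumes hto_adj: "inf c a \<le> b \<longleftrightarrow> c \<le> hto a b"

definition hneg :: "'a::heyting \<Rightarrow> 'a" where
  "hneg a = hto a bot"

definition hmeet :: "'b set \<Rightarrow> ('b \<Rightarrow> 'a::heyting) \<Rightarrow> 'a" where
  "hmeet A f = Finite_Set.fold (\<lambda>x acc. inf (f x) acc) top A"

definition hjoin :: "'b set \<Rightarrow> ('b \<Rightarrow> 'a::heyting) \<Rightarrow> 'a" where
  "hjoin A f = Finite_Set.fold (\<lambda>x acc. sup (f x) acc) bot A"

text \<open>Propositional variables (contours) are natural numbers (a countably
infinite set). A zone is a pair (in, out).\<close>

type_synonym zone = "nat set \<times> nat set"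

definition zones :: "nat set \<Rightarrow> zone set" where
  "zones L = {(I, L - I) | I. I \<subseteq> L}"

datatype unitary =
    Venn "nat set" "zone set"                \<comment> \<open>(L, Z(L), S): labels and shaded zones\<close>
  | Euler "nat set" "zone set"               \<comment> \<open>(L, Z): labels and visible zones\<close>
  | EulerVenn "nat set" "zone set" "zone set"

datatype cdiag =
    Unit unitary
  | Conj cdiag cdiag
  | Disj cdiag cdiag
  | Impl cdiag cdiag

fun wf_unitary :: "unitary \<Rightarrow> bool" where
  "wf_unitary (Venn L S) = (finite L \<and> S \<subseteq> zones L)"
| "wf_unitary (Euler L Z) = (finite L \<and> Z \<subseteq> zones L)"
| "wf_unitary (EulerVenn L Z S) = (finite L \<and> S \<subseteq> Z \<and> Z \<subseteq> zones L)"

definition missing :: "nat set \<Rightarrow> zone set \<Rightarrow> zone set" where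
  "missing L Z = zones L - Z"

definition adj :: "zone \<Rightarrow> nat \<Rightarrow> zone" where
  "adj z c = (if c \<in> fst z then (fst z - {c}, snd z \<union> {c})
              else (fst z \<union> {c}, snd z - {c}))"

definition zone_red :: "zone \<Rightarrow> nat \<Rightarrow> zone" where
  "zone_red z c = (fst z - {c}, snd z - {c})"

definition euler_red :: "nat set \<Rightarrow> zone set \<Rightarrow> nat \<Rightarrow> unitary" where
  "euler_red L Z c = Euler (L - {c}) ((\<lambda>z. zone_red z c) ` Z)"

definition Pos :: "nat \<Rightarrow> cdiag" where
  "Pos c = Unit (Venn {c} {({c}, {})})"

definition zval :: "(nat \<Rightarrow> 'a::heyting) \<Rightarrow> zone \<Rightarrow> 'a" where
  "zval v z = inf (hmeet (fst z) v) (hmeet (snd z) (\<lambda>c. hneg (v c)))"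

definition mval :: "(nat \<Rightarrow> 'a::heyting) \<Rightarrow> zone \<Rightarrow> 'a" where
  "mval v z = hto (hmeet (fst z) v) (hjoin (snd z) v)"

fun usem :: "(nat \<Rightarrow> 'a::heyting) \<Rightarrow> unitary \<Rightarrow> 'a" where
  "usem v (Venn L S) = hjoin S (zval v)"
| "usem v (Euler L Z) = hmeet (missing L Z) (mval v)"
| "usem v (EulerVenn L Z S) = hto (hmeet (missing L Z) (mval v)) (hjoin S (zval v))"

fun sem :: "(nat \<Rightarrow> 'a::heyting) \<Rightarrow> cdiag \<Rightarrow> 'a" where
  "sem v (Unit u) = usem v u"
| "sem v (Conj a b) = inf (sem v a) (sem v b)"
| "sem v (Disj a b) = sup (sem v a) (sem v b)"
| "sem v (Impl a b) = hto (sem v a) (sem v b)"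

text \<open>Validity of a sequent Gamma => Delta in Heyting algebras of type 'a
(multiplicities are irrelevant for meets/joins by idempotence).\<close>
definition valid_in :: "'a::heyting itself \<Rightarrow> cdiag multiset \<Rightarrow> cdiag multiset \<Rightarrow> bool" where
  "valid_in _ \<Gamma> \<Delta> = (\<forall>v :: nat \<Rightarrow> 'a.
      hmeet (set_mset \<Gamma>) (sem v) \<le> hjoin (set_mset \<Delta>) (sem v))"

end

theory Submission
  imports Defs
begin

(* A pure Euler diagram denotes the meet of the implications m(z) over its missing zones z.
   Reducing by a contour c is sound on the left because every missing zone I/O of d\c lifts to
   two missing zones of d, with c inside and with c outside, and (c \<and> I \<rightarrow> O) \<and> (I \<rightarrow> O \<or> c)
   entails I \<rightarrow> O by a cut on c. Conversely, under the adjacency hypothesis every missing zone z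
   has a missing neighbour adj z l, so z\l is missing in d\l and m(z\l) \<le> m(z); hence d is
   equivalent to the meet of its non-trivial reductions. Zone separation is the identity
   M(d) = M(d1) \<union> M(d2), and a diagram with a single missing zone z is just m(z), so the
   impdec rules are the sequent rules of Heyting implication. *)

lemma hmeet_empty [simp]: "hmeet {} f = top"
  by (simp add: hmeet_def)

lemma hjoin_empty [simp]: "hjoin {} f = bot"
  by (simp add: hjoin_def)

lemma hmeet_insert [simp]:
  assumes "finite A"
  shows "hmeet (insert x A) f = inf (f x) (hmeet A f)"
proof -
  interpret comp_fun_idem "inf \<circ> f"
    by (rule comp_fun_idem.comp_comp_fun_idem[OF comp_fun_idem_inf])
  show ?thesis
    using assms unfolding hmeet_def comp_def[symmetric] by simp
qed

lemma hjoin_insert [simp]: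
  assumes "finite A"
  shows "hjoin (insert x A) f = sup (f x) (hjoin A f)"
proof -
  interpret comp_fun_idem "sup \<circ> f"
    by (rule comp_fun_idem.comp_comp_fun_idem[OF comp_fun_idem_sup])
  show ?thesis
    using assms unfolding hjoin_def comp_def[symmetric] by simp
qed

lemma le_hmeet_iff: "finite A \<Longrightarrow> y \<le> hmeet A f \<longleftrightarrow> (\<forall>a\<in>A. y \<le> f a)"
  by (induction A rule: finite_induct) auto

lemma hjoin_le_iff: "finite A \<Longrightarrow> hjoin A f \<le> y \<longleftrightarrow> (\<forall>a\<in>A. f a \<le> y)"
  by (induction A rule: finite_induct) auto

lemma hmeet_lower: "finite A \<Longrightarrow> a \<in> A \<Longrightarrow> hmeet A f \<le> f a"
  using le_hmeet_iff by blast

lemma hjoin_upper: "finite A \<Longrightarrow> a \<in> A \<Longrightarrow> f a \<le> hjoin A f"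
  using hjoin_le_iff by blast

lemma hmeet_anti_mono: "finite B \<Longrightarrow> A \<subseteq> B \<Longrightarrow> hmeet B f \<le> hmeet A f"
  using finite_subset[of A B] by (auto simp: le_hmeet_iff intro: hmeet_lower)

lemma hjoin_mono: "finite B \<Longrightarrow> A \<subseteq> B \<Longrightarrow> hjoin A f \<le> hjoin B f"
  using finite_subset[of A B] by (auto simp: hjoin_le_iff intro: hjoin_upper)

lemma hmeet_Un: "finite A \<Longrightarrow> finite B \<Longrightarrow> hmeet (A \<union> B) f = inf (hmeet A f) (hmeet B f)"
  by (rule antisym) (auto simp: le_hmeet_iff intro: hmeet_lower le_infI1 le_infI2)

lemma hmeet_image: "finite A \<Longrightarrow> hmeet (g ` A) f = hmeet A (\<lambda>x. f (g x))"
  by (rule antisym) (auto simp: le_hmeet_iff intro: hmeet_lower)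

lemma hjoin_image: "finite A \<Longrightarrow> hjoin (g ` A) f = hjoin A (\<lambda>x. f (g x))"
  by (rule antisym) (auto simp: hjoin_le_iff intro: hjoin_upper)

lemma sup_hmeet_distrib: "finite A \<Longrightarrow> sup (hmeet A f) d = hmeet A (\<lambda>a. sup (f a) d)"
  by (induction A rule: finite_induct) (simp_all add: sup_inf_distrib2)

lemma inf_hjoin_distrib: "finite A \<Longrightarrow> inf d (hjoin A f) = hjoin A (\<lambda>a. inf d (f a))"
  by (induction A rule: finite_induct) (simp_all add: inf_sup_distrib1)

lemma hto_mp: "inf (hto a b) a \<le> b"
  using hto_adj by blast

lemma hto_mono:
  assumes "a' \<le> a" "b \<le> b'"
  shows "hto a b \<le> hto a' b'"
proof -
  have "inf (hto a b) a' \<le> inf (hto a b) a"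
    using assms(1) by (rule inf_mono[OF order.refl])
  also have "\<dots> \<le> b"
    by (rule hto_mp)
  also have "\<dots> \<le> b'"
    by (rule assms(2))
  finally show ?thesis
    using hto_adj by blast
qed

lemma hto_cut: "inf (hto (inf c a) b) (hto a (sup b c)) \<le> hto a b"
proof -
  let ?X = "hto (inf c a) b" and ?Y = "hto a (sup b c)"
  have "inf (inf ?X ?Y) a \<le> inf ?Y a"
    by (rule inf_mono) simp_all
  also have "\<dots> \<le> sup b c"
    by (rule hto_mp)
  finally have "inf (inf ?X ?Y) a \<le> inf (inf ?X a) (sup b c)"
    by (simp add: le_infI1)
  also have "\<dots> = sup (inf (inf ?X a) b) (inf (inf ?X a) c)"
    by (rule inf_sup_distrib1)
  also have "\<dots> \<le> b"
  proof (rule sup_least)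
    show "inf (inf ?X a) c \<le> b"
      using hto_mp[of "inf c a" b] by (simp add: inf.assoc inf.commute inf.left_commute)
  qed simp
  finally show ?thesis
    using hto_adj by blast
qed

lemma mem_zones_iff: "z \<in> zones L \<longleftrightarrow> fst z \<subseteq> L \<and> snd z = L - fst z"
  unfolding zones_def by (cases z) auto

lemma finite_zones:
  assumes "finite L"
  shows "finite (zones L)"
proof -
  have "zones L = (\<lambda>I. (I, L - I)) ` Pow L"
    unfolding zones_def by auto
  then show ?thesis
    using assms by simp
qed

lemma finite_missing: "finite L \<Longrightarrow> finite (missing L Z)"
  unfolding missing_def by (simp add: finite_zones)

lemma finite_zone_parts: "finite L \<Longrightarrow> z \<in> zones L \<Longrightarrow> finite (fst z) \<and> finite (snd z)"
  by (auto simp: mem_zones_iff intro: finite_subset)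

lemma sem_Pos [simp]: "sem v (Pos c) = v c"
  by (simp add: Pos_def zval_def)

lemma mval_mono:
  assumes "fst z' \<subseteq> fst z" "snd z' \<subseteq> snd z" "finite (fst z)" "finite (snd z)"
  shows "mval v z' \<le> mval v z"
  unfolding mval_def using assms by (intro hto_mono hmeet_anti_mono hjoin_mono)

lemma mval_cut:
  assumes "finite (fst w)" "finite (snd w)"
  shows "inf (mval v (insert c (fst w), snd w)) (mval v (fst w, insert c (snd w))) \<le> mval v w"
  using assms hto_cut unfolding mval_def by (simp add: sup_commute)

lemma zone_red_eq_cases:
  assumes "z \<in> zones L" "z' \<in> zones L" "zone_red z' l = zone_red z l"
  shows "z' = z \<or> z' = adj z l"
  using assms unfolding mem_zones_iff zone_red_def adj_def
  by (cases z; cases z'; cases "l \<in> fst z"; cases "l \<in> fst z'") auto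

definition reducing_contours :: "nat set \<Rightarrow> zone set \<Rightarrow> nat set" where
  "reducing_contours L Z = {c\<in>L. missing (L - {c}) ((\<lambda>z. zone_red z c) ` Z) \<noteq> {}}"

lemma usem_Euler_le_euler_red:
  assumes "finite L" "c \<in> L"
  shows "usem v (Euler L Z) \<le> usem v (euler_red L Z c)"
proof -
  have "usem v (Euler L Z) \<le> mval v w"
    if w: "w \<in> missing (L - {c}) ((\<lambda>z. zone_red z c) ` Z)" for w
  proof -
    let ?z1 = "(insert c (fst w), snd w)" and ?z2 = "(fst w, insert c (snd w))"
    have w_zone: "w \<in> zones (L - {c})" and w_notin: "w \<notin> (\<lambda>z. zone_red z c) ` Z"
      using w unfolding missing_def by auto
    then obtain I where w_eq: "w = (I, L - {c} - I)" "I \<subseteq> L - {c}"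
      unfolding zones_def by blast
    then have "?z1 \<in> zones L" "?z2 \<in> zones L" "zone_red ?z1 c = w" "zone_red ?z2 c = w"
      using \<open>c \<in> L\<close> unfolding mem_zones_iff zone_red_def by auto
    with w_notin have "?z1 \<in> missing L Z" "?z2 \<in> missing L Z"
      unfolding missing_def by (auto intro: rev_image_eqI)
    then have "usem v (Euler L Z) \<le> inf (mval v ?z1) (mval v ?z2)"
      using finite_missing[OF \<open>finite L\<close>] by (simp add: hmeet_lower)
    also have "\<dots> \<le> mval v w"
      using finite_zone_parts[OF _ w_zone] \<open>finite L\<close> by (simp add: mval_cut)
    finally show ?thesis .
  qed
  then show ?thesis
    unfolding euler_red_def using \<open>finite L\<close> by (simp add: finite_missing le_hmeet_iff)
qed

lemma zone_red_missing:
  assumes "Z \<subseteq> zones L" "z \<in> missing L Z" "adj z l \<in> missing L Z"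
  shows "zone_red z l \<in> missing (L - {l}) ((\<lambda>z. zone_red z l) ` Z)"
proof -
  have "zone_red z l \<notin> (\<lambda>z. zone_red z l) ` Z"
  proof
    assume "zone_red z l \<in> (\<lambda>z. zone_red z l) ` Z"
    then obtain z' where "z' \<in> Z" "zone_red z' l = zone_red z l"
      by auto
    then show False
      using zone_red_eq_cases[of z L z' l] assms unfolding missing_def by auto
  qed
  moreover have "zone_red z l \<in> zones (L - {l})"
    using assms(2) by (auto simp: missing_def mem_zones_iff zone_red_def)
  ultimately show ?thesis
    unfolding missing_def by blast
qed

lemma usem_Euler_eq_hmeet_reductions:
  assumes "wf_unitary (Euler L Z)" and adjacent: "\<forall>z\<in>missing L Z. \<exists>l\<in>L. adj z l \<in> missing L Z"
  shows "usem v (Euler L Z) = hmeet (reducing_contours L Z) (\<lambda>c. usem v (euler_red L Z c))"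
    (is "?d = hmeet ?C ?red")
proof (rule antisym)
  have "finite L" "Z \<subseteq> zones L"
    using assms(1) by auto
  then have "finite ?C"
    unfolding reducing_contours_def by simp
  show "?d \<le> hmeet ?C ?red"
    using \<open>finite ?C\<close> usem_Euler_le_euler_red[OF \<open>finite L\<close>]
    by (auto simp: le_hmeet_iff reducing_contours_def simp del: usem.simps)
  have "hmeet ?C ?red \<le> mval v z" if z: "z \<in> missing L Z" for z
  proof -
    obtain l where "l \<in> L" "adj z l \<in> missing L Z"
      using adjacent z by blast
    then have reduced: "zone_red z l \<in> missing (L - {l}) ((\<lambda>z. zone_red z l) ` Z)"
      using zone_red_missing \<open>Z \<subseteq> zones L\<close> z by blast
    then have "hmeet ?C ?red \<le> ?red l"
      using \<open>finite ?C\<close> \<open>l \<in> L\<close> by (auto simp: reducing_contours_def intro: hmeet_lower)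
    also have "\<dots> \<le> mval v (zone_red z l)"
      using reduced \<open>finite L\<close> by (simp add: euler_red_def finite_missing hmeet_lower)
    also have "\<dots> \<le> mval v z"
      using z \<open>finite L\<close> finite_zone_parts[of L z]
      by (intro mval_mono) (auto simp: missing_def zone_red_def)
    finally show ?thesis .
  qed
  then show "hmeet ?C ?red \<le> ?d"
    using \<open>finite L\<close> by (simp add: finite_missing le_hmeet_iff)
qed

lemma usem_Euler_Int:
  assumes "finite L"
  shows "usem v (Euler L (Z1 \<inter> Z2)) = inf (usem v (Euler L Z1)) (usem v (Euler L Z2))"
proof -
  have "missing L (Z1 \<inter> Z2) = missing L Z1 \<union> missing L Z2"
    unfolding missing_def by auto
  then show ?thesis
    using assms by (simp add: finite_missing hmeet_Un)
qed

lemma redL_sound: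
  fixes H :: "'a::heyting itself"
  assumes wf: "wf_unitary (Euler L Z)"
    and adjacent: "\<forall>z\<in>missing L Z. \<exists>l\<in>L. adj z l \<in> missing L Z"
    and premise: "valid_in H (image_mset (\<lambda>c. Unit (euler_red L Z c))
                              (mset_set (reducing_contours L Z)) + \<Gamma>) \<Delta>"
  shows "valid_in H (add_mset (Unit (Euler L Z)) \<Gamma>) \<Delta>"
proof -
  have "finite (reducing_contours L Z)"
    using wf by (simp add: reducing_contours_def)
  then have "hmeet (set_mset (add_mset (Unit (Euler L Z)) \<Gamma>)) (sem v) =
      hmeet (set_mset (image_mset (\<lambda>c. Unit (euler_red L Z c)) (mset_set (reducing_contours L Z)) + \<Gamma>))
        (sem v)" for v :: "nat \<Rightarrow> 'a"
    by (simp add: usem_Euler_eq_hmeet_reductions[OF wf adjacent] hmeet_Un hmeet_image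
        del: usem.simps)
  then show ?thesis
    using premise by (simp add: valid_in_def)
qed

lemma redR_sound:
  fixes H :: "'a::heyting itself"
  assumes wf: "wf_unitary (Euler L Z)"
    and adjacent: "\<forall>z\<in>missing L Z. \<exists>l\<in>L. adj z l \<in> missing L Z"
    and reduced_valid: "\<forall>c\<in>reducing_contours L Z. valid_in H \<Gamma> (add_mset (Unit (euler_red L Z c)) \<Delta>)"
  shows "valid_in H \<Gamma> (add_mset (Unit (Euler L Z)) \<Delta>)"
  unfolding valid_in_def
proof
  fix v :: "nat \<Rightarrow> 'a"
  let ?G = "hmeet (set_mset \<Gamma>) (sem v)" and ?D = "hjoin (set_mset \<Delta>) (sem v)"
  have "finite (reducing_contours L Z)"
    using wf by (simp add: reducing_contours_def)
  moreover have "?G \<le> hmeet (reducing_contours L Z) (\<lambda>c. sup (usem v (euler_red L Z c)) ?D)"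
    using reduced_valid \<open>finite (reducing_contours L Z)\<close>
    by (auto simp: le_hmeet_iff valid_in_def simp del: usem.simps)
  ultimately show "?G \<le> hjoin (set_mset (add_mset (Unit (Euler L Z)) \<Delta>)) (sem v)"
    by (simp add: usem_Euler_eq_hmeet_reductions[OF wf adjacent] sup_hmeet_distrib del: usem.simps)
qed

lemma mzsepL_sound:
  fixes H :: "'a::heyting itself"
  assumes "finite L" "Z1 \<inter> Z2 = Z"
    and "valid_in H (add_mset (Unit (Euler L Z1)) (add_mset (Unit (Euler L Z2)) \<Gamma>)) \<Delta>"
  shows "valid_in H (add_mset (Unit (Euler L Z)) \<Gamma>) \<Delta>"
  using assms(3) unfolding assms(2)[symmetric]
  by (simp add: valid_in_def usem_Euler_Int[OF assms(1)] inf.assoc del: usem.simps)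

lemma mzsepR_sound:
  fixes H :: "'a::heyting itself"
  assumes "finite L" "Z1 \<inter> Z2 = Z"
    and "valid_in H \<Gamma> (add_mset (Unit (Euler L Z1)) \<Delta>)"
    and "valid_in H \<Gamma> (add_mset (Unit (Euler L Z2)) \<Delta>)"
  shows "valid_in H \<Gamma> (add_mset (Unit (Euler L Z)) \<Delta>)"
  using assms(3,4) unfolding assms(2)[symmetric]
  by (simp add: valid_in_def usem_Euler_Int[OF assms(1)] sup_inf_distrib2 del: usem.simps)

lemma impdecL_sound:
  fixes H :: "'a::heyting itself"
  assumes wf: "wf_unitary (Euler L Z)" and single: "missing L Z = {z}"
    and left: "\<forall>n\<in>fst z. valid_in H (add_mset (Unit (Euler L Z)) \<Gamma>) {#Pos n#}"
    and right: "\<forall>m\<in>snd z. valid_in H (add_mset (Pos m) \<Gamma>) \<Delta>"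
  shows "valid_in H (add_mset (Unit (Euler L Z)) \<Gamma>) \<Delta>"
  unfolding valid_in_def
proof
  fix v :: "nat \<Rightarrow> 'a"
  let ?G = "hmeet (set_mset \<Gamma>) (sem v)" and ?D = "hjoin (set_mset \<Delta>) (sem v)"
  let ?x = "inf (mval v z) ?G"
  have d: "usem u (Euler L Z) = mval u z" for u :: "nat \<Rightarrow> 'a"
    using single by simp
  have "z \<in> zones L"
    using single unfolding missing_def by (metis Diff_iff insertI1)
  then have fin: "finite (fst z)" "finite (snd z)"
    using wf finite_zone_parts[of L z] by simp_all
  have "?x \<le> hmeet (fst z) v"
    using left fin(1) by (simp add: le_hmeet_iff valid_in_def d del: usem.simps)
  then have "?x \<le> inf (mval v z) (hmeet (fst z) v)"
    by simp
  also have "\<dots> \<le> hjoin (snd z) v"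
    unfolding mval_def by (rule hto_mp)
  finally have "?x = hjoin (snd z) (\<lambda>m. inf ?x (v m))"
    using fin(2) by (simp add: inf_hjoin_distrib[symmetric] inf_absorb1)
  also have "\<dots> \<le> ?D"
  proof (subst hjoin_le_iff[OF fin(2)], intro ballI)
    fix m
    assume "m \<in> snd z"
    then have "inf (v m) ?G \<le> ?D"
      using right by (simp add: valid_in_def)
    moreover have "inf ?x (v m) \<le> inf (v m) ?G"
      by (simp add: le_infI1 le_infI2)
    ultimately show "inf ?x (v m) \<le> ?D"
      by (rule order_trans[rotated])
  qed
  finally show "hmeet (set_mset (add_mset (Unit (Euler L Z)) \<Gamma>)) (sem v) \<le> ?D"
    by (simp add: d del: usem.simps)
qed

lemma impdecR_sound:
  fixes H :: "'a::heyting itself"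
  assumes wf: "wf_unitary (Euler L Z)" and single: "missing L Z = {z}"
    and premise: "valid_in H (image_mset Pos (mset_set (fst z)) + \<Gamma>) (image_mset Pos (mset_set (snd z)))"
  shows "valid_in H \<Gamma> (add_mset (Unit (Euler L Z)) \<Delta>)"
  unfolding valid_in_def
proof
  fix v :: "nat \<Rightarrow> 'a"
  let ?G = "hmeet (set_mset \<Gamma>) (sem v)"
  have "z \<in> zones L"
    using single unfolding missing_def by (metis Diff_iff insertI1)
  then have "finite (fst z)" "finite (snd z)"
    using wf finite_zone_parts[of L z] by simp_all
  then have "inf (hmeet (fst z) v) ?G \<le> hjoin (snd z) v"
    using premise by (simp add: valid_in_def hmeet_Un hmeet_image hjoin_image)
  then have "?G \<le> mval v z"
    unfolding mval_def by (simp add: hto_adj[symmetric] inf_commute)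
  then show "?G \<le> hjoin (set_mset (add_mset (Unit (Euler L Z)) \<Delta>)) (sem v)"
    using single by (simp add: le_supI1)
qed

theorem lemma8:
  fixes H :: "'a::heyting itself"
  shows
  \<comment> \<open>(a) redL\<close>
  "(\<forall>L Z \<Gamma> \<Delta>. wf_unitary (Euler L Z) \<longrightarrow>
      (\<forall>z\<in>missing L Z. \<exists>l\<in>L. adj z l \<in> missing L Z) \<longrightarrow>
      valid_in H (image_mset (\<lambda>c. Unit (euler_red L Z c))
                    (mset_set {c\<in>L. missing (L - {c}) ((\<lambda>z. zone_red z c) ` Z) \<noteq> {}}) + \<Gamma>) \<Delta> \<longrightarrow>
      valid_in H (add_mset (Unit (Euler L Z)) \<Gamma>) \<Delta>)
  \<and> \<comment> \<open>(a) redR\<close>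
   (\<forall>L Z \<Gamma> \<Delta>. wf_unitary (Euler L Z) \<longrightarrow>
      (\<forall>z\<in>missing L Z. \<exists>l\<in>L. adj z l \<in> missing L Z) \<longrightarrow>
      (\<forall>c\<in>{c\<in>L. missing (L - {c}) ((\<lambda>z. zone_red z c) ` Z) \<noteq> {}}.
          valid_in H \<Gamma> (add_mset (Unit (euler_red L Z c)) \<Delta>)) \<longrightarrow>
      valid_in H \<Gamma> (add_mset (Unit (Euler L Z)) \<Delta>))
  \<and> \<comment> \<open>(b) mzsepL\<close>
   (\<forall>L Z Z1 Z2 \<Gamma> \<Delta>. wf_unitary (Euler L Z) \<longrightarrow> wf_unitary (Euler L Z1) \<longrightarrow>
      wf_unitary (Euler L Z2) \<longrightarrow> card (missing L Z) > 1 \<longrightarrow> Z1 \<inter> Z2 = Z \<longrightarrow>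
      valid_in H (add_mset (Unit (Euler L Z1)) (add_mset (Unit (Euler L Z2)) \<Gamma>)) \<Delta> \<longrightarrow>
      valid_in H (add_mset (Unit (Euler L Z)) \<Gamma>) \<Delta>)
  \<and> \<comment> \<open>(b) mzsepR\<close>
   (\<forall>L Z Z1 Z2 \<Gamma> \<Delta>. wf_unitary (Euler L Z) \<longrightarrow> wf_unitary (Euler L Z1) \<longrightarrow>
      wf_unitary (Euler L Z2) \<longrightarrow> card (missing L Z) > 1 \<longrightarrow> Z1 \<inter> Z2 = Z \<longrightarrow>
      valid_in H \<Gamma> (add_mset (Unit (Euler L Z1)) \<Delta>) \<longrightarrow>
      valid_in H \<Gamma> (add_mset (Unit (Euler L Z2)) \<Delta>) \<longrightarrow>
      valid_in H \<Gamma> (add_mset (Unit (Euler L Z)) \<Delta>))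
  \<and> \<comment> \<open>(c) impdecL\<close>
   (\<forall>L Z z \<Gamma> \<Delta>. wf_unitary (Euler L Z) \<longrightarrow> missing L Z = {z} \<longrightarrow>
      (\<forall>n\<in>fst z. valid_in H (add_mset (Unit (Euler L Z)) \<Gamma>) {#Pos n#}) \<longrightarrow>
      (\<forall>m\<in>snd z. valid_in H (add_mset (Pos m) \<Gamma>) \<Delta>) \<longrightarrow>
      valid_in H (add_mset (Unit (Euler L Z)) \<Gamma>) \<Delta>)
  \<and> \<comment> \<open>(c) impdecR\<close>
   (\<forall>L Z z \<Gamma> \<Delta>. wf_unitary (Euler L Z) \<longrightarrow> missing L Z = {z} \<longrightarrow>
      valid_in H (image_mset Pos (mset_set (fst z)) + \<Gamma>) (image_mset Pos (mset_set (snd z))) \<longrightarrow>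
      valid_in H \<Gamma> (add_mset (Unit (Euler L Z)) \<Delta>))"
  apply (intro conjI allI impI)
       apply (rule redL_sound[unfolded reducing_contours_def]; assumption)
      apply (rule redR_sound[unfolded reducing_contours_def]; assumption)
     apply (rule mzsepL_sound, simp, assumption+)
    apply (rule mzsepR_sound, simp, assumption+)
   apply (rule impdecL_sound; assumption)
  apply (rule impdecR_sound; assumption)
  done

end
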